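(* Let $m\ge1$, $n\ge1$, $N>2n$, and let $\mathbf y$ be a stationary reciprocal process of order $n$ on $\mathbb Z_N$. For each $t$, write $\hat{\mathbb E}[\mathbf y(t)\mid \mathbf y(s),s\ne t]=-\sum_{k=-n,\,k\ne0}^{n}F_k(t)\,\mathbf y(t-k)$ (such a representation exists by reciprocity). Then the coefficient matrices $F_k(t)\in\mathbb R^{m\times m}$ can be taken independent of $t$; and if $\mathbf y$ is full rank, they are uniquely determined, do not depend on $t$, and are determined by the covariance lags $\Sigma_0,\Sigma_1,\dots,\Sigma_{2n}$ of the process.
   Context: A process on $\mathbb Z_N$ is a zero-mean second-order $\mathbb R^m$-valued process $\{\mathbf y(t)\}_{t=1}^N$, time indices taken modulo $N$, whose covariance $\boldsymbol\Sigma_N=\mathbb E\,\mathbf y\mathbf y^\top$ is symmetric block-circulant (its $(i,j)$ block depends only on $(i-j)\bmod N$); it is then stationary with lags $\Sigma_k=\mathbb E\,\mathbf y(t+k)\mathbf y(t)^\top$. It is full rank if $\boldsymbol\Sigma_N>0$. $\hat{\mathbb E}[\cdot\mid\cdot]$ is orthogonal projection onto the closed linear span of the scalar components of the conditioning variables. Subspaces $\mathcal A,\mathcal B$ are conditionally orthogonal given $\mathcal C$ if $a-\hat{\mathbb E}[a\mid\mathcal C]$ and $b-\hat{\mathbb E}[b\mid\mathcal C]$ are uncorrelated for all $a\in\mathcal A$, $b\in\mathcal B$. The process is reciprocal of order $n$ if for every cyclic interval $(t_1,t_2)$ the variables $\{\mathbf y(t):t\in(t_1,t_2)\}$ are conditionally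 orthogonal to $\{\mathbf y(s):s\notin(t_1,t_2)\}$ given $\mathbf y(t_1-n+1),\dots,\mathbf y(t_1),\mathbf y(t_2),\dots,\mathbf y(t_2+n-1)$; in particular $\hat{\mathbb E}[\mathbf y(t)\mid\mathbf y(s),s\ne t]=\hat{\mathbb E}[\mathbf y(t)\mid \mathbf y(t-n),\dots,\mathbf y(t-1),\mathbf y(t+1),\dots,\mathbf y(t+n)]$. *)

theory Defs
  imports "HOL-Analysis.Analysis"
begin

text \<open>A second-order process on Z_N is modelled abstractly inside a real inner product
space 'h (the Hilbert space of zero-mean finite-variance random variables, inner product
= E[a b]).  y t i (t < N, i < m) is the i-th scalar component of y(t).\<close>

definition ymod :: "(nat \<Rightarrow> nat \<Rightarrow> 'h) \<Rightarrow> nat \<Rightarrow> int \<Rightarrow> nat \<Rightarrow> 'h" where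
  "ymod y N t i = y (nat (t mod int N)) i"

definition comps :: "(nat \<Rightarrow> nat \<Rightarrow> 'h) \<Rightarrow> nat \<Rightarrow> nat set \<Rightarrow> 'h set" where
  "comps y m T = {y t i | t i. t \<in> T \<and> i < m}"

definition is_proj :: "'h::real_inner set \<Rightarrow> 'h \<Rightarrow> 'h \<Rightarrow> bool" where
  "is_proj C x p \<longleftrightarrow> p \<in> span C \<and> (\<forall>c\<in>C. inner (x - p) c = 0)"

definition proj :: "'h::real_inner set \<Rightarrow> 'h \<Rightarrow> 'h" where
  "proj C x = (THE p. is_proj C x p)"

definition cond_orth :: "'h::real_inner set \<Rightarrow> 'h set \<Rightarrow> 'h set \<Rightarrow> bool" where
  "cond_orth A B C \<longleftrightarrow>
     (\<forall>a\<in>span A. \<forall>b\<in>span B. inner (a - proj C a) (b - proj C b) = 0)"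

text \<open>Covariance lag Sigma_k = E y(t+k) y(t)^T, entry (i,j), computed at t = 0.\<close>
definition lag :: "(nat \<Rightarrow> nat \<Rightarrow> 'h::real_inner) \<Rightarrow> nat \<Rightarrow> int \<Rightarrow> nat \<Rightarrow> nat \<Rightarrow> real" where
  "lag y N k i j = inner (ymod y N k i) (y 0 j)"

definition stationary :: "(nat \<Rightarrow> nat \<Rightarrow> 'h::real_inner) \<Rightarrow> nat \<Rightarrow> nat \<Rightarrow> bool" where
  "stationary y m N \<longleftrightarrow>
     (\<forall>t<N. \<forall>s<N. \<forall>i<m. \<forall>j<m.
        inner (y t i) (y s j) = inner (ymod y N (int t - int s) i) (y 0 j))"

text \<open>Full rank: Sigma_N positive definite.\<close>
definition full_rank :: "(nat \<Rightarrow> nat \<Rightarrow> 'h::real_inner) \<Rightarrow> nat \<Rightarrow> nat \<Rightarrow> bool" where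
  "full_rank y m N \<longleftrightarrow>
     (\<forall>c::nat \<Rightarrow> nat \<Rightarrow> real. (\<exists>t<N. \<exists>i<m. c t i \<noteq> 0) \<longrightarrow>
        (\<Sum>t<N. \<Sum>s<N. \<Sum>i<m. \<Sum>j<m. c t i * c s j * inner (y t i) (y s j)) > 0)"

definition cyc_interval :: "nat \<Rightarrow> int \<Rightarrow> int \<Rightarrow> nat set" where
  "cyc_interval N t1 t2 =
     {nat ((t1 + j) mod int N) | j. 0 < j \<and> j < (t2 - t1) mod int N}"

definition cyc_boundary :: "nat \<Rightarrow> nat \<Rightarrow> int \<Rightarrow> int \<Rightarrow> nat set" where
  "cyc_boundary N n t1 t2 =
     {nat ((t1 - j) mod int N) | j. 0 \<le> j \<and> j < int n}
     \<union> {nat ((t2 + j) mod int N) | j. 0 \<le> j \<and> j < int n}"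

definition reciprocal :: "(nat \<Rightarrow> nat \<Rightarrow> 'h::real_inner) \<Rightarrow> nat \<Rightarrow> nat \<Rightarrow> nat \<Rightarrow> bool" where
  "reciprocal y m N n \<longleftrightarrow>
     (\<forall>t1 t2. cond_orth (comps y m (cyc_interval N t1 t2))
                        (comps y m ({0..<N} - cyc_interval N t1 t2))
                        (comps y m (cyc_boundary N n t1 t2)))"

text \<open>F (k,i,j) = (F_k)_{ij} represents the one-step interpolator at time t:
  E^[y(t) | y(s), s <> t] = - sum_{k=-n..n, k<>0} F_k y(t-k).\<close>
definition represents ::
  "(nat \<Rightarrow> nat \<Rightarrow> 'h::real_inner) \<Rightarrow> nat \<Rightarrow> nat \<Rightarrow> nat \<Rightarrow> nat \<Rightarrow> (int \<Rightarrow> nat \<Rightarrow> nat \<Rightarrow> real) \<Rightarrow> bool" where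
  "represents y m N n t F \<longleftrightarrow>
     (\<forall>i<m. proj (comps y m ({0..<N} - {t})) (y t i) =
        - (\<Sum>k\<in>{-int n..int n} - {0}. \<Sum>j<m. F k i j *\<^sub>R ymod y N (int t - k) j))"

end

theory Submission
  imports Defs
begin

text \<open>The interpolation error y(t) + \<Sum> F_k y(t-k) must be orthogonal to every y(s),
  s \<noteq> t. By stationarity these orthogonality conditions become normal equations in the
  covariance lags alone, which do not mention t, so coefficients valid at time 0 are
  valid at every time. Reciprocity on the interval (-1, 1) says that projecting y(0) onto
  its 2n neighbours already gives the projection onto all other components; hence the
  normal equations at the offsets 0 < |d| \<le> n, which involve only the lags up to 2n,
  characterise the interpolator, and any reciprocal process with the same lags has the
  same coefficients. Under full rank the components of the neighbours are linearly
  independent, so the coefficients are unique.\<close>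

lemma inner_eq_0_on_span:
  fixes v w :: "'h::real_inner"
  assumes "\<And>c. c \<in> C \<Longrightarrow> inner v c = 0" and "w \<in> span C"
  shows "inner v w = 0"
  using orthogonal_to_span[OF assms(2), of v] assms(1) by (simp add: orthogonal_def)

lemma is_proj_unique:
  assumes "is_proj C x p" and "is_proj C x q"
  shows "p = q"
proof -
  have "inner (p - q) c = 0" if "c \<in> C" for c
  proof -
    have "inner (x - p) c = 0" "inner (x - q) c = 0"
      using assms that by (auto simp: is_proj_def)
    then show ?thesis by (simp add: inner_diff_left)
  qed
  moreover have "p - q \<in> span C"
    using assms by (simp add: is_proj_def span_diff)
  ultimately have "inner (p - q) (p - q) = 0" by (rule inner_eq_0_on_span)
  then show ?thesis by simp
qed

lemma proj_eqI: "is_proj C x p \<Longrightarrow> proj C x = p"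
  unfolding proj_def by (rule the_equality) (auto intro: is_proj_unique)

text \<open>Adjoining a to C, the old projection is corrected along the component of a
  orthogonal to C.\<close>
lemma is_proj_exists:
  fixes C :: "'h::real_inner set"
  assumes "finite C"
  shows "\<exists>p. is_proj C x p"
  using assms
proof (induction C arbitrary: x rule: finite_induct)
  case empty
  show ?case by (rule exI[of _ 0]) (simp add: is_proj_def)
next
  case (insert a C)
  obtain q where q: "is_proj C a q" using insert.IH by blast
  obtain r where r: "is_proj C x r" using insert.IH by blast
  define e where "e = a - q"
  define p where "p = r + (inner (x - r) e / inner e e) *\<^sub>R e"
  have span_C_subset: "span C \<subseteq> span (insert a C)" by (rule span_mono) auto
  have "e \<in> span (insert a C)"
    using q span_C_subset unfolding e_def is_proj_def by (auto intro: span_diff span_base)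
  then have p_span: "p \<in> span (insert a C)"
    using r span_C_subset unfolding p_def is_proj_def by (auto intro: span_add span_scale)
  have e_orth: "inner e c = 0" if "c \<in> C" for c
    using q that by (simp add: is_proj_def e_def)
  have p_orth_C: "inner (x - p) c = 0" if "c \<in> C" for c
    using r e_orth[OF that] that
    unfolding p_def is_proj_def by (simp add: inner_diff_left inner_add_left)
  have "inner (x - p) q = 0"
    using inner_eq_0_on_span[OF p_orth_C] q by (simp add: is_proj_def)
  moreover have "inner (x - p) e = 0"
    by (cases "e = 0") (simp_all add: p_def inner_diff_left inner_add_left)
  ultimately have "inner (x - p) a = 0"
    by (simp add: e_def inner_diff_right)
  with p_span p_orth_C show ?case
    unfolding is_proj_def by blast
qed

lemma span_image_obtain_coeffs:
  fixes f :: "'a \<Rightarrow> 'h::real_vector"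
  assumes "finite A" and "v \<in> span (f ` A)"
  obtains c where "v = (\<Sum>a\<in>A. c a *\<^sub>R f a)"
proof -
  from assms(2) have "\<exists>c. v = (\<Sum>a\<in>A. c a *\<^sub>R f a)"
  proof (induction rule: span_induct_alt)
    case base
    show ?case by (rule exI[of _ "\<lambda>_. 0"]) simp
  next
    case (step r x v)
    then obtain b c where "b \<in> A" "x = f b" "v = (\<Sum>a\<in>A. c a *\<^sub>R f a)" by blast
    then have "r *\<^sub>R x + v = (\<Sum>a\<in>A. (c a + (if a = b then r else 0)) *\<^sub>R f a)"
      using assms(1) by (simp add: scaleR_add_left sum.distrib if_distrib[of "\<lambda>r. r *\<^sub>R _"]
          cong: if_cong)
    then show ?case by (rule exI[where x = "\<lambda>a. c a + (if a = b then r else 0)"])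
  qed
  then show ?thesis using that by blast
qed

lemma mod_eq_imp_eq_int:
  fixes a b :: int
  assumes "a mod int N = b mod int N" and "\<bar>a - b\<bar> < int N"
  shows "a = b"
proof (rule ccontr)
  assume "a \<noteq> b"
  moreover have "int N dvd a - b"
    using assms(1) by (simp add: mod_eq_dvd_iff)
  ultimately have "int N \<le> \<bar>a - b\<bar>"
    using dvd_imp_le_int[of "a - b" "int N"] by simp
  with assms(2) show False by simp
qed

abbreviation offsets :: "nat \<Rightarrow> int set" where
  "offsets n \<equiv> {-int n..int n} - {0}"

lemma offsets_mod_inj:
  assumes "k \<in> offsets n" and "k' \<in> offsets n" and "N > 2 * n"
    and "(a - k) mod int N = (a - k') mod int N"
  shows "k = k'"
  using mod_eq_imp_eq_int[OF assms(4)] assms(1-3) by auto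

lemma offset_mod_neq:
  assumes "k \<in> offsets n" and "N > 2 * n"
  shows "(a - k) mod int N \<noteq> a mod int N"
proof
  assume "(a - k) mod int N = a mod int N"
  then have "a - k = a"
    by (rule mod_eq_imp_eq_int) (use assms in \<open>auto simp: abs_if\<close>)
  with assms(1) show False by simp
qed

lemma ymod_of_nat [simp]: "t < N \<Longrightarrow> ymod w N (int t) i = w t i"
  by (simp add: ymod_def)

lemma ymod_0 [simp]: "ymod w N 0 i = w 0 i"
  by (simp add: ymod_def)

lemma lag_mod_eq: "a mod int N = b mod int N \<Longrightarrow> lag w N a i j = lag w N b i j"
  by (simp add: lag_def ymod_def)

lemma ymod_in_comps:
  assumes "nat (a mod int N) \<in> T" and "j < m"
  shows "ymod w N a j \<in> comps w m T"
  using assms unfolding comps_def ymod_def by blast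

lemma stationary_inner:
  assumes "stationary w m N" and "N > 0" and "i < m" and "j < m"
  shows "inner (ymod w N a i) (ymod w N b j) = lag w N (a - b) i j"
proof -
  define s t where "s = nat (a mod int N)" and "t = nat (b mod int N)"
  have "s < N" "t < N" "int s = a mod int N" "int t = b mod int N"
    using assms(2) by (auto simp: s_def t_def nat_less_iff)
  moreover from this have "(int s - int t) mod int N = (a - b) mod int N"
    by (simp add: mod_diff_eq)
  ultimately show ?thesis
    using assms(1,3,4) unfolding stationary_def lag_def
    by (simp add: s_def t_def ymod_def)
qed

lemma lag_uminus:
  assumes "stationary w m N" and "N > 0" and "i < m" and "j < m"
  shows "lag w N (- d) i j = lag w N d j i"
  using stationary_inner[OF assms, of 0 d] stationary_inner[OF assms(1,2,4,3), of d 0]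
  by (simp add: inner_commute)

lemma lag_eq_if_lags_eq:
  assumes "stationary w m N" and "stationary v m N" and "N > 0"
    and "\<forall>k\<le>2 * n. \<forall>i<m. \<forall>j<m. lag w N (int k) i j = lag v N (int k) i j"
    and "\<bar>d\<bar> \<le> 2 * int n" and "i < m" and "j < m"
  shows "lag w N d i j = lag v N d i j"
proof (cases "d \<ge> 0")
  case True
  then have "d = int (nat d)" "nat d \<le> 2 * n" using assms(5) by auto
  then show ?thesis using assms(4,6,7) by metis
next
  case False
  define e where "e = nat (- d)"
  have d: "d = - int e" and e: "e \<le> 2 * n" using False assms(5) by (auto simp: e_def)
  have "lag w N d i j = lag w N (int e) j i"
    unfolding d by (rule lag_uminus[OF assms(1,3,6,7)])
  also have "\<dots> = lag v N (int e) j i"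
    using assms(4,6,7) e by blast
  also have "\<dots> = lag v N d i j"
    unfolding d by (rule lag_uminus[OF assms(2,3,6,7), symmetric])
  finally show ?thesis .
qed

lemma proj_eq_iff: "finite C \<Longrightarrow> proj C x = p \<longleftrightarrow> is_proj C x p"
  using is_proj_exists[of C x] proj_eqI by metis

lemma finite_comps:
  assumes "finite S"
  shows "finite (comps w m S)"
proof -
  have "comps w m S = (\<lambda>(t, i). w t i) ` (S \<times> {..<m})"
    unfolding comps_def by auto
  with assms show ?thesis by simp
qed

definition neighbour_sum ::
  "(nat \<Rightarrow> nat \<Rightarrow> 'h::real_vector) \<Rightarrow> nat \<Rightarrow> nat \<Rightarrow> nat \<Rightarrow> (int \<Rightarrow> nat \<Rightarrow> nat \<Rightarrow> real) \<Rightarrow> int \<Rightarrow> nat \<Rightarrow> 'h"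
  where "neighbour_sum w m N n F a i = (\<Sum>k\<in>offsets n. \<Sum>j<m. F k i j *\<^sub>R ymod w N (a - k) j)"

text \<open>Entry (i,l) of the covariance of the interpolation error y(t) + \<Sum> F_k y(t-k)
  with y(t-d).\<close>
definition error_cov ::
  "(nat \<Rightarrow> nat \<Rightarrow> 'h::real_inner) \<Rightarrow> nat \<Rightarrow> nat \<Rightarrow> nat \<Rightarrow> (int \<Rightarrow> nat \<Rightarrow> nat \<Rightarrow> real) \<Rightarrow> int \<Rightarrow> nat \<Rightarrow> nat \<Rightarrow> real"
  where "error_cov w m N n F d i l =
    lag w N d i l + (\<Sum>k\<in>offsets n. \<Sum>j<m. F k i j * lag w N (d - k) j l)"

lemma inner_error_ymod:
  assumes "stationary w m N" and "N > 0" and "i < m" and "l < m"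
  shows "inner (ymod w N a i + neighbour_sum w m N n F a i) (ymod w N b l)
    = error_cov w m N n F (a - b) i l"
proof -
  have "inner (neighbour_sum w m N n F a i) (ymod w N b l)
      = (\<Sum>k\<in>offsets n. \<Sum>j<m. F k i j * lag w N (a - b - k) j l)"
    unfolding neighbour_sum_def inner_sum_left inner_scaleR_left
    by (intro sum.cong refl) (simp add: stationary_inner[OF assms(1,2) _ assms(4)] algebra_simps)
  then show ?thesis
    by (simp add: inner_add_left error_cov_def stationary_inner[OF assms])
qed

lemma error_cov_mod_eq:
  assumes "d mod int N = d' mod int N"
  shows "error_cov w m N n F d i l = error_cov w m N n F d' i l"
proof -
  have "lag w N (d - k) j l = lag w N (d' - k) j l" for k j
    using assms by (metis lag_mod_eq mod_diff_left_eq)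
  then show ?thesis
    unfolding error_cov_def lag_mod_eq[OF assms] by simp
qed

lemma represents_iff_is_proj:
  "represents w m N n t F \<longleftrightarrow>
    (\<forall>i<m. is_proj (comps w m ({0..<N} - {t})) (w t i) (- neighbour_sum w m N n F (int t) i))"
  unfolding represents_def neighbour_sum_def by (simp add: proj_eq_iff finite_comps)

lemma neighbour_sum_in_span:
  assumes "N > 2 * n" and "t < N"
  shows "neighbour_sum w m N n F (int t) i \<in> span (comps w m ({0..<N} - {t}))"
proof -
  have "nat ((int t - k) mod int N) \<in> {0..<N} - {t}" if "k \<in> offsets n" for k
    using offset_mod_neq[OF that assms(1), of "int t"] assms
    by (auto simp: nat_less_iff nat_eq_iff)
  then show ?thesis
    unfolding neighbour_sum_def
    by (intro span_sum span_scale span_base ymod_in_comps) auto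
qed

lemma all_nonzero_residues_iff:
  assumes "t < N" and "\<And>d d'. d mod int N = d' mod int N \<Longrightarrow> P d \<longleftrightarrow> P d'"
  shows "(\<forall>s<N. s \<noteq> t \<longrightarrow> P (int t - int s)) \<longleftrightarrow> (\<forall>d. d mod int N \<noteq> 0 \<longrightarrow> P d)"
proof (intro iffI allI impI)
  fix d assume all_s: "\<forall>s<N. s \<noteq> t \<longrightarrow> P (int t - int s)" and "d mod int N \<noteq> 0"
  define s where "s = nat ((int t - d) mod int N)"
  have "int s = (int t - d) mod int N" "s < N"
    using assms(1) by (auto simp: s_def nat_less_iff)
  moreover from this have d: "(int t - int s) mod int N = d mod int N"
    by (simp add: mod_diff_right_eq)
  moreover from d \<open>d mod int N \<noteq> 0\<close> assms(1) have "s \<noteq> t" by auto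
  ultimately show "P d"
    using all_s assms(2)[OF d] by blast
next
  fix s assume all_d: "\<forall>d. d mod int N \<noteq> 0 \<longrightarrow> P d" and "s < N" "s \<noteq> t"
  have "\<bar>(int t - int s) - 0\<bar> < int N"
    using \<open>s < N\<close> assms(1) by linarith
  then have "(int t - int s) mod int N \<noteq> 0"
    using mod_eq_imp_eq_int[of "int t - int s" N 0] \<open>s \<noteq> t\<close> by auto
  with all_d show "P (int t - int s)" by blast
qed

text \<open>The normal equations of the interpolator, in a form that no longer mentions t.\<close>
lemma represents_iff_error_cov:
  assumes "stationary w m N" and "N > 2 * n" and "t < N"
  shows "represents w m N n t F \<longleftrightarrow>
    (\<forall>d. d mod int N \<noteq> 0 \<longrightarrow> (\<forall>i<m. \<forall>l<m. error_cov w m N n F d i l = 0))"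
proof -
  have N: "N > 0" using assms(2) by simp
  have inner_eq: "inner (w t i + neighbour_sum w m N n F (int t) i) (w s l)
      = error_cov w m N n F (int t - int s) i l" if "i < m" "l < m" "s < N" for i l s
    using inner_error_ymod[OF assms(1) N that(1,2), where a = "int t" and b = "int s"] assms(3) that(3)
    by simp
  have "is_proj (comps w m ({0..<N} - {t})) (w t i) (- neighbour_sum w m N n F (int t) i)
      \<longleftrightarrow> (\<forall>s<N. s \<noteq> t \<longrightarrow> (\<forall>l<m. error_cov w m N n F (int t - int s) i l = 0))"
    if "i < m" for i
    using span_neg[OF neighbour_sum_in_span[OF assms(2,3)]]
    unfolding is_proj_def comps_def by (fastforce simp: inner_eq[OF that])
  then have "represents w m N n t F \<longleftrightarrow>
      (\<forall>s<N. s \<noteq> t \<longrightarrow> (\<forall>i<m. \<forall>l<m. error_cov w m N n F (int t - int s) i l = 0))"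
    unfolding represents_iff_is_proj by auto
  also have "\<dots> \<longleftrightarrow> (\<forall>d. d mod int N \<noteq> 0 \<longrightarrow> (\<forall>i<m. \<forall>l<m. error_cov w m N n F d i l = 0))"
    by (rule all_nonzero_residues_iff[OF assms(3)]) (metis error_cov_mod_eq)
  finally show ?thesis .
qed

lemma represents_iff_represents_0:
  assumes "stationary w m N" and "N > 2 * n" and "t < N"
  shows "represents w m N n t F \<longleftrightarrow> represents w m N n 0 F"
proof -
  have "0 < N" using assms(3) by simp
  show ?thesis
    by (simp only: represents_iff_error_cov[OF assms] represents_iff_error_cov[OF assms(1,2) \<open>0 < N\<close>])
qed

lemma error_cov_eq_if_lags_eq:
  assumes "stationary w m N" and "stationary v m N" and "N > 0"
    and "\<forall>k\<le>2 * n. \<forall>i<m. \<forall>j<m. lag w N (int k) i j = lag v N (int k) i j"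
    and "d \<in> offsets n" and "i < m" and "l < m"
  shows "error_cov w m N n F d i l = error_cov v m N n F d i l"
proof -
  have "lag w N (d - k) j l = lag v N (d - k) j l" if "k \<in> offsets n" "j < m" for k j
    using assms(5) that by (intro lag_eq_if_lags_eq[OF assms(1-4)] assms(7)) auto
  moreover have "lag w N d i l = lag v N d i l"
    using assms(5) by (intro lag_eq_if_lags_eq[OF assms(1-4)] assms(6,7)) auto
  ultimately show ?thesis
    unfolding error_cov_def by simp
qed

definition neighbours :: "(nat \<Rightarrow> nat \<Rightarrow> 'h) \<Rightarrow> nat \<Rightarrow> nat \<Rightarrow> nat \<Rightarrow> 'h set" where
  "neighbours w m N n = (\<lambda>(k, j). ymod w N (- k) j) ` (offsets n \<times> {..<m})"

lemma finite_neighbours: "finite (neighbours w m N n)"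
  unfolding neighbours_def by simp

lemma neighbours_subset:
  assumes "N > 2 * n"
  shows "neighbours w m N n \<subseteq> comps w m ({0..<N} - {0})"
proof -
  have "nat ((- k) mod int N) \<in> {0..<N} - {0}" if "k \<in> offsets n" for k
    using offset_mod_neq[OF that assms, of 0] assms by (auto simp: nat_less_iff nat_eq_iff)
  then show ?thesis
    unfolding neighbours_def by (auto intro: ymod_in_comps)
qed

lemma cyc_interval_around_0:
  assumes "N > 2"
  shows "cyc_interval N (-1) 1 = {0}"
proof -
  have "(1 - (-1)) mod int N = 2" using assms by simp
  moreover have "0 < j \<and> j < 2 \<longleftrightarrow> j = 1" for j :: int by arith
  ultimately show ?thesis
    unfolding cyc_interval_def by auto
qed

lemma cyc_boundary_around_0:
  "cyc_boundary N n (-1) 1 = (\<lambda>k. nat ((- k) mod int N)) ` offsets n"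
proof (rule set_eqI, rule iffI)
  fix x assume "x \<in> cyc_boundary N n (-1) 1"
  then consider j where "0 \<le> j" "j < int n" "x = nat ((-1 - j) mod int N)"
    | j where "0 \<le> j" "j < int n" "x = nat ((1 + j) mod int N)"
    unfolding cyc_boundary_def by auto
  then show "x \<in> (\<lambda>k. nat ((- k) mod int N)) ` offsets n"
  proof cases
    case 1
    then show ?thesis by (intro image_eqI[of _ _ "1 + j"]) auto
  next
    case 2
    then show ?thesis by (intro image_eqI[of _ _ "- (1 + j)"]) (auto simp: add.commute)
  qed
next
  fix x assume "x \<in> (\<lambda>k. nat ((- k) mod int N)) ` offsets n"
  then obtain k where k: "k \<in> offsets n" "x = nat ((- k) mod int N)" by blast
  show "x \<in> cyc_boundary N n (-1) 1"
  proof (cases "k > 0")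
    case True
    then have "x = nat ((-1 - (k - 1)) mod int N)" "0 \<le> k - 1" "k - 1 < int n"
      using k by auto
    then show ?thesis unfolding cyc_boundary_def by blast
  next
    case False
    then have "x = nat ((1 + (- k - 1)) mod int N)" "0 \<le> - k - 1" "- k - 1 < int n"
      using k by auto
    then show ?thesis unfolding cyc_boundary_def by blast
  qed
qed

lemma comps_cyc_boundary_around_0:
  "comps w m (cyc_boundary N n (-1) 1) = neighbours w m N n"
  unfolding cyc_boundary_around_0 neighbours_def comps_def ymod_def by auto

text \<open>Reciprocity on the interval (-1, 1): given the neighbours, y(0) is conditionally
  orthogonal to all other components, so projecting onto the neighbours suffices.\<close>
lemma reciprocal_is_proj_neighbours:
  assumes "reciprocal w m N n" and "N > 2 * n" and "n \<ge> 1" and "i < m"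
    and p: "is_proj (neighbours w m N n) (w 0 i) p"
  shows "is_proj (comps w m ({0..<N} - {0})) (w 0 i) p"
proof -
  let ?B = "neighbours w m N n"
  have "cyc_interval N (-1) 1 = {0}"
    using assms(2,3) by (intro cyc_interval_around_0) linarith
  then have co: "cond_orth (comps w m {0}) (comps w m ({0..<N} - {0})) ?B"
    using assms(1) unfolding reciprocal_def comps_cyc_boundary_around_0[symmetric] by metis
  have "inner (w 0 i - p) b = 0" if b: "b \<in> comps w m ({0..<N} - {0})" for b
  proof -
    obtain q where q: "is_proj ?B b q" using is_proj_exists[OF finite_neighbours] by blast
    have "w 0 i \<in> span (comps w m {0})" using assms(4) by (auto simp: comps_def intro: span_base)
    then have "inner (w 0 i - p) (b - q) = 0"
      using co b proj_eqI[OF p] proj_eqI[OF q] unfolding cond_orth_def by (auto intro: span_base)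
    moreover have "inner (w 0 i - p) q = 0"
      using inner_eq_0_on_span[of ?B "w 0 i - p" q] p q by (auto simp: is_proj_def)
    ultimately show ?thesis by (simp add: inner_diff_right)
  qed
  moreover have "p \<in> span (comps w m ({0..<N} - {0}))"
    using p span_mono[OF neighbours_subset[OF assms(2)]] by (auto simp: is_proj_def)
  ultimately show ?thesis
    unfolding is_proj_def by blast
qed

lemma represents_0_if_error_cov_offsets:
  assumes "stationary w m N" and "reciprocal w m N n" and "N > 2 * n" and "n \<ge> 1"
    and "\<forall>d\<in>offsets n. \<forall>i<m. \<forall>l<m. error_cov w m N n F d i l = 0"
  shows "represents w m N n 0 F"
  unfolding represents_iff_is_proj
proof (intro allI impI)
  fix i assume i: "i < m"
  have N: "N > 0" using assms(3) by simp
  have "ymod w N (- k) j \<in> neighbours w m N n" if "k \<in> offsets n" "j < m" for k j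
    unfolding neighbours_def using that by (intro image_eqI[of _ _ "(k, j)"]) auto
  then have "- neighbour_sum w m N n F 0 i \<in> span (neighbours w m N n)"
    unfolding neighbour_sum_def by (intro span_neg span_sum span_scale span_base) simp
  moreover have "inner (w 0 i + neighbour_sum w m N n F 0 i) c = 0"
    if c: "c \<in> neighbours w m N n" for c
  proof -
    obtain k l where k: "k \<in> offsets n" and "l < m" and "c = ymod w N (- k) l"
      using c unfolding neighbours_def by (auto simp del: Diff_iff atLeastAtMost_iff)
    then have "inner (w 0 i + neighbour_sum w m N n F 0 i) c = error_cov w m N n F k i l"
      using inner_error_ymod[OF assms(1) N i \<open>l < m\<close>, where a = 0 and b = "- k"] by simp
    also have "\<dots> = 0"
      using assms(5) k i \<open>l < m\<close> by blast
    finally show ?thesis .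
  qed
  ultimately have "is_proj (neighbours w m N n) (w 0 i) (- neighbour_sum w m N n F 0 i)"
    unfolding is_proj_def by simp
  then show "is_proj (comps w m ({0..<N} - {0})) (w 0 i) (- neighbour_sum w m N n F (int 0) i)"
    using reciprocal_is_proj_neighbours[OF assms(2-4) i] by simp
qed

lemma represents_0_exists:
  assumes "reciprocal w m N n" and "N > 2 * n" and "n \<ge> 1"
  shows "\<exists>F. represents w m N n 0 F"
proof -
  let ?A = "offsets n \<times> {..<m}"
  let ?f = "\<lambda>(k, j). ymod w N (- k) j"
  have "\<exists>c. is_proj (neighbours w m N n) (w 0 i) (\<Sum>a\<in>?A. c a *\<^sub>R ?f a)" for i
  proof -
    obtain p where p: "is_proj (neighbours w m N n) (w 0 i) p"
      using is_proj_exists[OF finite_neighbours] by blast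
    moreover obtain c where "p = (\<Sum>a\<in>?A. c a *\<^sub>R ?f a)"
      using p unfolding is_proj_def neighbours_def
      by (auto elim: span_image_obtain_coeffs[rotated])
    ultimately show ?thesis by blast
  qed
  then obtain C where C: "\<And>i. is_proj (neighbours w m N n) (w 0 i) (\<Sum>a\<in>?A. C i a *\<^sub>R ?f a)"
    by metis
  define F where "F k i j = - C i (k, j)" for k i j
  have "(\<Sum>a\<in>?A. C i a *\<^sub>R ?f a) = - neighbour_sum w m N n F 0 i" for i
    unfolding neighbour_sum_def F_def
    by (simp add: sum.cartesian_product split_beta sum_negf)
  then have "represents w m N n 0 F"
    using reciprocal_is_proj_neighbours[OF assms, OF _ C] unfolding represents_iff_is_proj by simp
  then show ?thesis by blast
qed

lemma represents_0_transfer: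
  assumes "stationary y m N" and "stationary z m N" and "reciprocal z m N n"
    and "N > 2 * n" and "n \<ge> 1"
    and "\<forall>k\<le>2 * n. \<forall>i<m. \<forall>j<m. lag z N (int k) i j = lag y N (int k) i j"
    and "represents y m N n 0 F"
  shows "represents z m N n 0 F"
proof (rule represents_0_if_error_cov_offsets[OF assms(2-5)], intro ballI allI impI)
  fix d i l assume d: "d \<in> offsets n" and "i < m" "l < m"
  have N: "N > 0" using assms(4) by simp
  have "d mod int N \<noteq> 0"
    using offset_mod_neq[OF d assms(4), of d] by simp
  then have "error_cov y m N n F d i l = 0"
    using assms(7) \<open>i < m\<close> \<open>l < m\<close> unfolding represents_iff_error_cov[OF assms(1,4) N] by blast
  then show "error_cov z m N n F d i l = 0"
    using error_cov_eq_if_lags_eq[OF assms(2,1) N assms(6) d \<open>i < m\<close> \<open>l < m\<close>] by simp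
qed

lemma full_rank_coeffs_eq_0:
  assumes "full_rank w m N" and "(\<Sum>s<N. \<Sum>j<m. c s j *\<^sub>R w s j) = 0"
    and "s < N" and "j < m"
  shows "c s j = 0"
proof (rule ccontr)
  assume "c s j \<noteq> 0"
  then have "(\<Sum>t<N. \<Sum>s<N. \<Sum>i<m. \<Sum>j<m. c t i * c s j * inner (w t i) (w s j)) > 0"
    using assms(1,3,4) unfolding full_rank_def by blast
  also have "\<dots> = (\<Sum>t<N. \<Sum>i<m. \<Sum>s<N. \<Sum>j<m. c t i * c s j * inner (w t i) (w s j))"
    by (intro sum.cong refl sum.swap)
  also have "\<dots> = inner (\<Sum>t<N. \<Sum>i<m. c t i *\<^sub>R w t i) (\<Sum>s<N. \<Sum>j<m. c s j *\<^sub>R w s j)"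
    unfolding inner_sum_left inner_scaleR_left
    unfolding inner_sum_right inner_scaleR_right
    by (simp add: sum_distrib_left mult.assoc)
  finally show False
    using assms(2) by simp
qed

lemma full_rank_independent:
  assumes "full_rank w m N" and "inj_on g K" and "g ` K \<subseteq> {..<N}"
    and "(\<Sum>k\<in>K. \<Sum>j<m. d k j *\<^sub>R w (g k) j) = 0" and "k \<in> K" and "j < m"
  shows "d k j = 0"
proof -
  define c where "c s j = (if s \<in> g ` K then d (the_inv_into K g s) j else 0)" for s j
  have "(\<Sum>s<N. \<Sum>j<m. c s j *\<^sub>R w s j)
      = (\<Sum>s\<in>g ` K. \<Sum>j<m. d (the_inv_into K g s) j *\<^sub>R w s j)"
    unfolding c_def using assms(3)
    by (intro sum.mono_neutral_cong_right) auto
  also have "\<dots> = (\<Sum>k\<in>K. \<Sum>j<m. d k j *\<^sub>R w (g k) j)"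
    using assms(2) by (simp add: sum.reindex the_inv_into_f_f)
  finally have "(\<Sum>s<N. \<Sum>j<m. c s j *\<^sub>R w s j) = 0"
    using assms(4) by simp
  then have "c (g k) j = 0"
    using full_rank_coeffs_eq_0[OF assms(1)] assms(3,5,6) by blast
  then show ?thesis
    using assms(2,5) by (simp add: c_def the_inv_into_f_f)
qed

lemma represents_unique:
  assumes "full_rank w m N" and "N > 2 * n" and "t < N"
    and "represents w m N n t F" and "represents w m N n t G"
    and "k \<in> offsets n" and "i < m" and "j < m"
  shows "G k i j = F k i j"
proof -
  define g where "g k = nat ((int t - k) mod int N)" for k
  have N: "N > 0" using assms(2) by simp
  have "inj_on g (offsets n)"
  proof (rule inj_onI)
    fix k k' assume "k \<in> offsets n" "k' \<in> offsets n" "g k = g k'"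
    moreover from \<open>g k = g k'\<close> have "(int t - k) mod int N = (int t - k') mod int N"
      using N unfolding g_def by (simp add: eq_nat_nat_iff)
    ultimately show "k = k'"
      using offsets_mod_inj[OF _ _ assms(2)] by blast
  qed
  moreover have "g ` offsets n \<subseteq> {..<N}"
    using N by (auto simp: g_def nat_less_iff)
  moreover have "(\<Sum>k\<in>offsets n. \<Sum>j<m. (G k i j - F k i j) *\<^sub>R w (g k) j) = 0"
  proof -
    have "neighbour_sum w m N n G (int t) i = neighbour_sum w m N n F (int t) i"
      using assms(4,5,7) unfolding represents_def neighbour_sum_def by simp
    then show ?thesis
      unfolding neighbour_sum_def g_def ymod_def
      by (simp add: scaleR_diff_left sum_subtractf)
  qed
  ultimately have "G k i j - F k i j = 0"
    by (rule full_rank_independent[OF assms(1) _ _ _ assms(6,8)])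
  then show ?thesis by simp
qed

theorem lemma1:
  fixes y :: "nat \<Rightarrow> nat \<Rightarrow> 'h::real_inner"
    and m n N :: nat
  assumes "m \<ge> 1" and "n \<ge> 1" and "N > 2 * n"
    and "stationary y m N"
    and "reciprocal y m N n"
  shows "(\<exists>F. \<forall>t<N. represents y m N n t F)
    \<and> (full_rank y m N \<longrightarrow>
        (\<exists>F. (\<forall>t<N. represents y m N n t F)
           \<and> (\<forall>t<N. \<forall>G. represents y m N n t G \<longrightarrow>
                (\<forall>k\<in>{-int n..int n} - {0}. \<forall>i<m. \<forall>j<m. G k i j = F k i j))
           \<and> (\<forall>z :: nat \<Rightarrow> nat \<Rightarrow> 'g::real_inner.
                stationary z m N \<and> reciprocal z m N n \<and> full_rank z m N
                \<and> (\<forall>k\<le>2 * n. \<forall>i<m. \<forall>j<m. lag z N (int k) i j = lag y N (int k) i j)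
                \<longrightarrow> (\<forall>t<N. represents z m N n t F))))"
proof -
  obtain F where F0: "represents y m N n 0 F"
    using represents_0_exists[OF assms(5,3,2)] by blast
  have F: "\<forall>t<N. represents y m N n t F"
    using represents_iff_represents_0[OF assms(4,3)] F0 by blast
  have unique: "\<forall>t<N. \<forall>G. represents y m N n t G \<longrightarrow>
      (\<forall>k\<in>offsets n. \<forall>i<m. \<forall>j<m. G k i j = F k i j)" if "full_rank y m N"
    using represents_unique[OF that assms(3)] F by blast
  have transfer: "\<forall>t<N. represents z m N n t F"
    if "stationary z m N" and "reciprocal z m N n"
      and "\<forall>k\<le>2 * n. \<forall>i<m. \<forall>j<m. lag z N (int k) i j = lag y N (int k) i j"
    for z :: "nat \<Rightarrow> nat \<Rightarrow> 'g::real_inner"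
    using represents_0_transfer[OF assms(4) that(1,2) assms(3,2) that(3) F0]
      represents_iff_represents_0[OF that(1) assms(3)] by blast
  show ?thesis
    using F unique transfer by (intro conjI impI exI[of _ F] allI) auto
qed

end
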